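(* Let $K$ be any $d$-simplex with vertices $P_1,\dots,P_{d+1}$ and local linear basis functions $\phi_{P_j}$. Then for every vertex $P_i$, $$\int_{K^*_{P_i}\cap K}\phi_{P_i}\,dx=m_1|K|,\qquad\int_{K^*_{P_i}\cap K}\phi_{P_j}\,dx=m_2|K|\ (j\ne i),$$ where $m_1=\frac{1}{(d+1)^3}\big(1+(d+1)\sum_{k=1}^d\frac1k\big)$ and $m_2=\frac{1}{d(d+1)^3}\big(d^2+2d-(d+1)\sum_{k=1}^d\frac1k\big)$ (so $m_1+dm_2=\frac1{d+1}$). Consequently the FVEM mass matrix $M=(M_{ij})_{i,j=1}^{N_{vi}}$, $M_{ij}=\int_{K^*_{P_i}}\phi_j\,dx$, satisfies $M_{ii}=m_1|\omega_i|$ and $M_{ij}=m_2|\omega_{ij}|$ for $i\ne j$; in particular $M$ is symmetric.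
   Context: Dual sub-regions: for a simplex $K$ with barycentric coordinates $\lambda$, $K^*_P\cap K=\{x\in K:\lambda_P(x)\ge\lambda_Q(x)\ \forall Q\}$; the dual element $K^*_P$ is their union over elements of the mesh $\mathcal{T}_h$ containing $P$. $\phi_j$ is the continuous piecewise linear nodal basis function of interior vertex $P_j$ ($j=1,\dots,N_{vi}$). $\omega_i$ is the union (patch) of elements containing $P_i$, $\omega_{ij}=\omega_i\cap\omega_j$, and $|\cdot|$ denotes $d$-dimensional volume. *)

theory Defs
  imports "HOL-Analysis.Analysis"
begin

text \<open>A d-simplex in a Euclidean space of dimension d = DIM('a) is given by its
  vertex set V: d+1 affinely independent points; the simplex itself is convex hull V.\<close>
definition is_simplex :: "'a::euclidean_space set \<Rightarrow> bool" where
  "is_simplex V \<longleftrightarrow> finite V \<and> card V = DIM('a) + 1 \<and> \<not> affine_dependent V"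

text \<open>Barycentric coordinates of x w.r.t. the vertex set V (coefficient function
  supported on V); bary V P is the local linear basis function of vertex P.\<close>
definition bary :: "'a::euclidean_space set \<Rightarrow> 'a \<Rightarrow> 'a \<Rightarrow> real" where
  "bary V P x = (THE u. (\<forall>v. v \<notin> V \<longrightarrow> u v = 0) \<and> sum u V = 1
                        \<and> (\<Sum>v\<in>V. u v *\<^sub>R v) = x) P"

definition dual_sub :: "'a::euclidean_space set \<Rightarrow> 'a \<Rightarrow> 'a set" where
  "dual_sub V P = {x \<in> convex hull V. \<forall>Q\<in>V. bary V Q x \<le> bary V P x}"

definition harm :: "nat \<Rightarrow> real" where
  "harm d = (\<Sum>k=1..d. 1 / real k)"

definition m1 :: "nat \<Rightarrow> real" where
  "m1 d = 1 / (real d + 1) ^ 3 * (1 + (real d + 1) * harm d)"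

definition m2 :: "nat \<Rightarrow> real" where
  "m2 d = 1 / (real d * (real d + 1) ^ 3) * ((real d)\<^sup>2 + 2 * real d - (real d + 1) * harm d)"

text \<open>A conforming simplicial mesh, given as a finite set of vertex sets of simplices:
  any two elements intersect in the convex hull of their common vertices (a common face,
  possibly empty).\<close>
definition simplicial_mesh :: "'a::euclidean_space set set \<Rightarrow> bool" where
  "simplicial_mesh T \<longleftrightarrow> finite T \<and> (\<forall>K\<in>T. is_simplex K) \<and>
     (\<forall>K1\<in>T. \<forall>K2\<in>T. convex hull K1 \<inter> convex hull K2 = convex hull (K1 \<inter> K2))"

definition mesh_domain :: "'a::euclidean_space set set \<Rightarrow> 'a set" where
  "mesh_domain T = (\<Union>K\<in>T. convex hull K)"

definition interior_vertex :: "'a::euclidean_space set set \<Rightarrow> 'a \<Rightarrow> bool" where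
  "interior_vertex T P \<longleftrightarrow> P \<in> \<Union>T \<and> P \<in> interior (mesh_domain T)"

definition nodal_basis :: "'a::euclidean_space set set \<Rightarrow> 'a \<Rightarrow> 'a \<Rightarrow> real" where
  "nodal_basis T P x =
     (if \<exists>K\<in>T. P \<in> K \<and> x \<in> convex hull K
      then bary (SOME K. K \<in> T \<and> P \<in> K \<and> x \<in> convex hull K) P x else 0)"

definition dual_elem :: "'a::euclidean_space set set \<Rightarrow> 'a \<Rightarrow> 'a set" where
  "dual_elem T P = (\<Union>K\<in>{K\<in>T. P \<in> K}. dual_sub K P)"

definition patch :: "'a::euclidean_space set set \<Rightarrow> 'a \<Rightarrow> 'a set" where
  "patch T P = (\<Union>K\<in>{K\<in>T. P \<in> K}. convex hull K)"

definition mass :: "'a::euclidean_space set set \<Rightarrow> 'a \<Rightarrow> 'a \<Rightarrow> real" where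
  "mass T P Q = integral (dual_elem T P) (nodal_basis T Q)"

end

theory Submission
  imports Defs "HOL-Combinatorics.Permutations"
begin

text \<open>
  Barycentric coordinates are affine, so a permutation of the vertices induces a volume-preserving
  affine self-map of the simplex K; hence the integral of \<open>\<lambda>\<^sub>Q\<close> over \<open>K*\<^sub>P\<close> only depends on
  whether \<open>Q = P\<close>. The dual sub-regions tile K up to the null set where two coordinates tie, and on
  \<open>K*\<^sub>P\<close> the largest coordinate is \<open>\<lambda>\<^sub>P\<close>, so the d + 1 diagonal integrals add up to the
  integral of \<open>max\<^sub>R \<lambda>\<^sub>R\<close> over K. By the maximum-minimums identity this is an alternating sum of
  the integrals of \<open>min\<^sub>R\<^sub>\<in>\<^sub>S \<lambda>\<^sub>R\<close>, which equal \<open>|K| / (|S| (d + 1))\<close> by self-similarity: the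
  region where all \<open>\<lambda>\<^sub>R\<close> with \<open>R \<in> S\<close> exceed t is a scaled copy of K on which the minimum is t
  plus a multiple of the rescaled minimum. The alternating sum evaluates to a harmonic number.
  Since the coordinates sum to 1, each row sums to \<open>|K*\<^sub>P| = |K| / (d + 1)\<close>, which gives the
  off-diagonal value. The mass matrix is assembled elementwise: elements overlap in null sets
  only, and on each element the nodal basis functions are its barycentric coordinates.
\<close>

section \<open>Barycentric coordinates\<close>

lemma is_simplex_finite: "is_simplex V \<Longrightarrow> finite V"
  by (simp add: is_simplex_def)

lemma affine_hull_simplex:
  assumes "is_simplex (V::'a::euclidean_space set)"
  shows "affine hull V = UNIV"
proof -
  have "of_nat (card V) = aff_dim V + 1"
    using assms aff_dim_affine_independent unfolding is_simplex_def by blast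
  then have "aff_dim V = int DIM('a)" using assms unfolding is_simplex_def by simp
  then show ?thesis by (rule affine_hull_UNIV)
qed

lemma bary_coordinates_unique:
  assumes "is_simplex (V::'a::euclidean_space set)"
    and "\<forall>v. v \<notin> V \<longrightarrow> u v = 0" "sum u V = 1" "(\<Sum>v\<in>V. u v *\<^sub>R v) = x"
    and "\<forall>v. v \<notin> V \<longrightarrow> w v = 0" "sum w V = 1" "(\<Sum>v\<in>V. w v *\<^sub>R v) = x"
  shows "u = w"
proof (rule ccontr)
  assume ne: "u \<noteq> w"
  have fin: "finite V" and ind: "\<not> affine_dependent V" using assms(1) is_simplex_def by auto
  define U where "U = (\<lambda>v. u v - w v)"
  have "sum U V = 0" using assms by (simp add: U_def sum_subtractf)
  moreover have "(\<Sum>v\<in>V. U v *\<^sub>R v) = 0"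
    using assms by (simp add: U_def scaleR_diff_left sum_subtractf)
  moreover have "\<exists>v\<in>V. U v \<noteq> 0"
  proof (rule ccontr)
    assume "\<not> ?thesis"
    then have "\<forall>v. u v = w v" using assms(2,5) by (metis U_def eq_iff_diff_eq_0)
    then show False using ne by auto
  qed
  ultimately have "affine_dependent V" using affine_dependent_explicit_finite[OF fin] by blast
  then show False using ind by blast
qed

lemma bary_eqI:
  assumes "is_simplex (V::'a::euclidean_space set)"
    and "\<forall>v. v \<notin> V \<longrightarrow> u v = 0" "sum u V = 1" "(\<Sum>v\<in>V. u v *\<^sub>R v) = x"
  shows "bary V R x = u R"
proof -
  have "(THE u. (\<forall>v. v \<notin> V \<longrightarrow> u v = 0) \<and> sum u V = 1 \<and> (\<Sum>v\<in>V. u v *\<^sub>R v) = x) = u"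
  proof (rule the_equality)
    show "(\<forall>v. v \<notin> V \<longrightarrow> u v = 0) \<and> sum u V = 1 \<and> (\<Sum>v\<in>V. u v *\<^sub>R v) = x"
      using assms by blast
  next
    fix w assume "(\<forall>v. v \<notin> V \<longrightarrow> w v = 0) \<and> sum w V = 1 \<and> (\<Sum>v\<in>V. w v *\<^sub>R v) = x"
    then show "w = u" using bary_coordinates_unique[OF assms] by blast
  qed
  then show ?thesis unfolding bary_def by simp
qed

lemma bary_sum_subset:
  assumes "is_simplex (V::'a::euclidean_space set)" "W \<subseteq> V" "sum u W = 1"
  shows "bary V R (\<Sum>v\<in>W. u v *\<^sub>R v) = (if R \<in> W then u R else 0)"
proof -
  have fin: "finite V" using assms is_simplex_finite by blast
  define u' where "u' = (\<lambda>v. if v \<in> W then u v else 0)"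
  have "sum u' V = sum u W"
  proof -
    have "sum u' V = (\<Sum>v\<in>V. if v \<in> W then u v else 0)"
      by (rule sum.cong) (auto simp: u'_def)
    also have "\<dots> = (\<Sum>v\<in>V \<inter> W. u v)" by (rule sum.inter_restrict[OF fin, symmetric])
    also have "V \<inter> W = W" using assms by blast
    finally show ?thesis .
  qed
  moreover have "(\<Sum>v\<in>V. u' v *\<^sub>R v) = (\<Sum>v\<in>W. u v *\<^sub>R v)"
  proof -
    have "(\<Sum>v\<in>V. u' v *\<^sub>R v) = (\<Sum>v\<in>V. if v \<in> W then u v *\<^sub>R v else 0)"
      by (rule sum.cong) (auto simp: u'_def)
    also have "\<dots> = (\<Sum>v\<in>V \<inter> W. u v *\<^sub>R v)" by (rule sum.inter_restrict[OF fin, symmetric])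
    also have "V \<inter> W = W" using assms by blast
    finally show ?thesis .
  qed
  moreover have "\<forall>v. v \<notin> V \<longrightarrow> u' v = 0" using assms by (auto simp: u'_def)
  ultimately have "bary V R (\<Sum>v\<in>W. u v *\<^sub>R v) = u' R"
    using assms(3) by (intro bary_eqI[OF assms(1)]) auto
  then show ?thesis by (simp add: u'_def)
qed

lemma
  assumes V: "is_simplex V"
  shows bary_outside: "v \<notin> V \<Longrightarrow> bary V v x = 0"
    and sum_bary: "(\<Sum>v\<in>V. bary V v x) = 1"
    and sum_bary_scaleR: "(\<Sum>v\<in>V. bary V v x *\<^sub>R v) = x"
proof -
  have "x \<in> affine hull V" using affine_hull_simplex[OF V] by simp
  then obtain u where u: "sum u V = 1" "(\<Sum>v\<in>V. u v *\<^sub>R v) = x"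
    using affine_hull_finite[OF is_simplex_finite[OF V]] by blast
  have "bary V v x = (if v \<in> V then u v else 0)" for v
    using bary_sum_subset[OF V subset_refl u(1)] u(2) by simp
  then show "v \<notin> V \<Longrightarrow> bary V v x = 0" "(\<Sum>v\<in>V. bary V v x) = 1"
    "(\<Sum>v\<in>V. bary V v x *\<^sub>R v) = x" using u by simp_all
qed

lemma bary_vertex:
  assumes V: "is_simplex V" and "P \<in> V"
  shows "bary V R P = (if R = P then 1 else 0)"
  using bary_sum_subset[OF V, of "{P}" "\<lambda>_. 1" R] assms(2) by auto

lemma bary_affine_combination:
  assumes V: "is_simplex V" and a: "\<forall>v. v \<notin> V \<longrightarrow> a v = 0" "sum a V + r = 1"
  shows "bary V R ((\<Sum>v\<in>V. a v *\<^sub>R v) + r *\<^sub>R y) = a R + r * bary V R y"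
proof (rule bary_eqI[OF V])
  show "\<forall>v. v \<notin> V \<longrightarrow> a v + r * bary V v y = 0" using a bary_outside[OF V] by auto
  show "(\<Sum>v\<in>V. a v + r * bary V v y) = 1"
    using a sum_bary[OF V] by (simp add: sum.distrib flip: sum_distrib_left)
  show "(\<Sum>v\<in>V. (a v + r * bary V v y) *\<^sub>R v) = (\<Sum>v\<in>V. a v *\<^sub>R v) + r *\<^sub>R y"
    using sum_bary_scaleR[OF V, of y]
    by (simp add: scaleR_add_left sum.distrib flip: scaleR_scaleR scaleR_sum_right)
qed

lemma bary_convex_combination:
  assumes V: "is_simplex V" and "a + b = 1"
  shows "bary V R (a *\<^sub>R x + b *\<^sub>R y) = a * bary V R x + b * bary V R y"
proof -
  have "a *\<^sub>R x = (\<Sum>v\<in>V. (a * bary V v x) *\<^sub>R v)"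
    using sum_bary_scaleR[OF V, of x] by (simp flip: scaleR_scaleR scaleR_sum_right)
  moreover have "bary V R ((\<Sum>v\<in>V. (a * bary V v x) *\<^sub>R v) + b *\<^sub>R y) = a * bary V R x + b * bary V R y"
    using assms bary_outside[OF V] sum_bary[OF V]
    by (subst bary_affine_combination[OF V]) (auto simp flip: sum_distrib_left)
  ultimately show ?thesis by simp
qed

lemma bary_affine:
  assumes V: "is_simplex (V::'a::euclidean_space set)"
  obtains a b where "\<And>x. bary V R x = a \<bullet> x + b"
proof -
  let ?L = "\<lambda>x. bary V R x - bary V R 0"
  have "linear ?L"
  proof (rule linearI)
    fix c and x :: 'a
    show "?L (c *\<^sub>R x) = c *\<^sub>R ?L x"
      using bary_convex_combination[OF V, of c "1 - c" R x 0] by (simp add: algebra_simps)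
  next
    fix x y :: 'a
    have "x + y = 2 *\<^sub>R ((1/2) *\<^sub>R x + (1/2) *\<^sub>R y) + (-1) *\<^sub>R 0" by (simp add: scaleR_add_right)
    then show "?L (x + y) = ?L x + ?L y"
      using bary_convex_combination[OF V, of 2 "-1" R "(1/2) *\<^sub>R x + (1/2) *\<^sub>R y" 0]
        bary_convex_combination[OF V, of "1/2" "1/2" R x y] by simp
  qed
  then have "?L x = (\<Sum>i\<in>Basis. ?L i *\<^sub>R i) \<bullet> x" for x
  proof -
    assume lin: "linear ?L"
    have "?L x = ?L (\<Sum>i\<in>Basis. (x \<bullet> i) *\<^sub>R i)" by (simp add: euclidean_representation)
    also have "\<dots> = (\<Sum>i\<in>Basis. ?L i * (i \<bullet> x))"
      by (simp add: linear_sum[OF lin] linear_scale[OF lin] inner_commute mult.commute)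
    finally show ?thesis by (simp add: inner_sum_left)
  qed
  then have "bary V R x = (\<Sum>i\<in>Basis. ?L i *\<^sub>R i) \<bullet> x + bary V R 0" for x
    by (metis diff_add_cancel)
  then show ?thesis by (rule that)
qed

lemma convex_hull_simplex_eq:
  assumes V: "is_simplex V"
  shows "convex hull V = {x. \<forall>R\<in>V. 0 \<le> bary V R x}"
proof (intro set_eqI iffI)
  fix x assume "x \<in> convex hull V"
  then obtain u where u: "\<forall>v\<in>V. 0 \<le> u v" "sum u V = 1" "(\<Sum>v\<in>V. u v *\<^sub>R v) = x"
    unfolding convex_hull_finite[OF is_simplex_finite[OF V]] by blast
  have "bary V R x = (if R \<in> V then u R else 0)" for R
    using bary_sum_subset[OF V subset_refl u(2), of R] unfolding u(3) .
  then show "x \<in> {x. \<forall>R\<in>V. 0 \<le> bary V R x}" using u(1) by simp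
next
  fix x assume "x \<in> {x. \<forall>R\<in>V. 0 \<le> bary V R x}"
  then show "x \<in> convex hull V"
    unfolding convex_hull_finite[OF is_simplex_finite[OF V]]
    using sum_bary[OF V, of x] sum_bary_scaleR[OF V, of x]
    by (intro CollectI exI[of _ "\<lambda>v. bary V v x"]) simp
qed

lemma compact_convex_hull_simplex: "is_simplex V \<Longrightarrow> compact (convex hull V)"
  by (simp add: compact_convex_hull is_simplex_finite finite_imp_compact)

lemma continuous_on_bary: "is_simplex V \<Longrightarrow> continuous_on S (bary V R)"
  by (erule bary_affine[where R = R]) (simp add: continuous_intros)

lemma negligible_bary_eq:
  assumes V: "is_simplex V" and "P \<in> V" "Q \<in> V" "P \<noteq> Q"
  shows "negligible {x. bary V P x = bary V Q x}"
proof -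
  obtain a b where ab: "\<And>x. bary V P x = a \<bullet> x + b" using bary_affine[OF V] by blast
  obtain a' b' where ab': "\<And>x. bary V Q x = a' \<bullet> x + b'" using bary_affine[OF V] by blast
  have "a - a' \<noteq> 0"
  proof
    assume "a - a' = 0"
    then have "bary V P P - bary V Q P = bary V P Q - bary V Q Q" by (simp add: ab ab')
    then show False using bary_vertex[OF V] assms by simp
  qed
  moreover have "{x. bary V P x = bary V Q x} = {x. (a - a') \<bullet> x = b' - b}"
    by (auto simp: ab ab' inner_diff_left)
  ultimately show ?thesis using negligible_hyperplane by metis
qed

section \<open>Scaled copies of a simplex\<close>

lemma emeasure_lborel_homothety:
  fixes t :: "'a::euclidean_space"
  assumes "r > 0" "A \<in> sets borel"
  shows "emeasure lborel A = ennreal (r ^ DIM('a)) * emeasure lborel ((\<lambda>x. t + r *\<^sub>R x) -` A)"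
  using assms by (subst lborel_affine[of r t])
    (simp_all add: emeasure_density nn_integral_cmult_indicator emeasure_distr)

lemma integral_lborel_homothety:
  fixes t :: "'a::euclidean_space" and f :: "'a \<Rightarrow> real"
  assumes "r > 0" "f \<in> borel_measurable borel"
  shows "(\<integral>x. f x \<partial>lborel) = r ^ DIM('a) * (\<integral>y. f (t + r *\<^sub>R y) \<partial>lborel)"
  using assms by (subst lborel_affine[of r t])
    (simp_all add: integral_density integral_distr)

lemma integrable_indicator_mult_continuous:
  fixes f :: "'a::euclidean_space \<Rightarrow> real"
  assumes "compact A" "continuous_on A f"
  shows "integrable lborel (\<lambda>x. indicator A x * f x)"
  using borel_integrable_compact[OF assms] by simp

text \<open>For thresholds \<open>c\<close> with \<open>\<Sum>c < 1\<close> this is the simplex scaled by \<open>1 - \<Sum>c\<close>;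
  these sets also form an \<open>\<inter>\<close>-stable generator of the Borel sets.\<close>

definition bary_ge_set :: "'a::euclidean_space set \<Rightarrow> ('a \<Rightarrow> real) \<Rightarrow> 'a set" where
  "bary_ge_set V c = {x. \<forall>R\<in>V. c R \<le> bary V R x}"

lemma closed_bary_ge_set: "is_simplex V \<Longrightarrow> closed (bary_ge_set V c)"
  unfolding bary_ge_set_def Collect_ball_eq
  by (intro closed_INT ballI closed_Collect_le continuous_on_const continuous_on_bary)

lemma bary_ge_set_Int: "bary_ge_set V c \<inter> bary_ge_set V c' = bary_ge_set V (\<lambda>R. max (c R) (c' R))"
  by (auto simp: bary_ge_set_def)

lemma convex_hull_Int_bary_ge_set:
  "is_simplex V \<Longrightarrow> convex hull V \<inter> bary_ge_set V c = bary_ge_set V (\<lambda>R. max (c R) 0)"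
  by (auto simp: bary_ge_set_def convex_hull_simplex_eq)

lemma bary_ge_set_eq_homothetic_image:
  assumes V: "is_simplex V" and c: "\<forall>v. v \<notin> V \<longrightarrow> c v = 0" and r: "0 < r" "sum c V + r = 1"
  shows "bary_ge_set V c = (\<lambda>y. (\<Sum>v\<in>V. c v *\<^sub>R v) + r *\<^sub>R y) ` (convex hull V)"
proof -
  let ?h = "\<lambda>y. (\<Sum>v\<in>V. c v *\<^sub>R v) + r *\<^sub>R y"
  have bary_h: "bary V R (?h y) = c R + r * bary V R y" for R y
    by (rule bary_affine_combination[OF V c r(2)])
  have "?h y \<in> bary_ge_set V c \<longleftrightarrow> y \<in> convex hull V" for y
    using r(1) by (simp add: bary_ge_set_def convex_hull_simplex_eq[OF V] bary_h zero_le_mult_iff)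
  moreover have "x = ?h ((1 / r) *\<^sub>R (x - (\<Sum>v\<in>V. c v *\<^sub>R v)))" for x
    using r(1) by simp
  ultimately show ?thesis by (metis (no_types, lifting) image_iff subsetI subset_antisym)
qed

lemma emeasure_bary_ge_set:
  assumes V: "is_simplex (V::'a::euclidean_space set)" and c: "\<forall>v. v \<notin> V \<longrightarrow> c v = 0"
  shows "emeasure lborel (bary_ge_set V c)
    = ennreal ((max 0 (1 - sum c V)) ^ DIM('a)) * emeasure lborel (convex hull V)"
proof (cases "sum c V < 1")
  case True
  define r where "r = 1 - sum c V"
  have r: "0 < r" "sum c V + r = 1" using True by (simp_all add: r_def)
  have "(\<lambda>y. (\<Sum>v\<in>V. c v *\<^sub>R v) + r *\<^sub>R y) -` bary_ge_set V c = convex hull V"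
    unfolding bary_ge_set_eq_homothetic_image[OF V c r] using r(1) by auto
  then have "emeasure lborel (bary_ge_set V c) = ennreal (r ^ DIM('a)) * emeasure lborel (convex hull V)"
    using emeasure_lborel_homothety[OF r(1), of "bary_ge_set V c" "\<Sum>v\<in>V. c v *\<^sub>R v"]
      closed_bary_ge_set[OF V] by simp
  then show ?thesis using r(1) by (simp add: r_def max_def)
next
  case False
  have "bary_ge_set V c \<subseteq> {\<Sum>v\<in>V. c v *\<^sub>R v}"
  proof
    fix x assume "x \<in> bary_ge_set V c"
    then have le: "\<forall>R\<in>V. c R \<le> bary V R x" by (simp add: bary_ge_set_def)
    then have "sum c V \<le> (\<Sum>R\<in>V. bary V R x)" by (simp add: sum_mono)
    then have "(\<Sum>R\<in>V. bary V R x - c R) = 0"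
      using sum_bary[OF V, of x] False by (simp add: sum_subtractf)
    then have "\<forall>R\<in>V. bary V R x = c R"
      using sum_nonneg_eq_0_iff[OF is_simplex_finite[OF V], of "\<lambda>R. bary V R x - c R"] le by simp
    then show "x \<in> {\<Sum>v\<in>V. c v *\<^sub>R v}"
      using sum_bary_scaleR[OF V, of x] by (simp cong: sum.cong)
  qed
  then have "emeasure lborel (bary_ge_set V c) = 0"
    by (metis emeasure_lborel_countable countable_finite finite.emptyI finite_insert finite_subset)
  then show ?thesis using False by (simp add: max_def)
qed

lemma measure_bary_ge_set:
  assumes V: "is_simplex (V::'a::euclidean_space set)" and c: "\<forall>v. v \<notin> V \<longrightarrow> c v = 0"
    and r: "0 \<le> r" "sum c V + r = 1"
  shows "measure lborel (bary_ge_set V c) = r ^ DIM('a) * measure lborel (convex hull V)"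
proof -
  have "1 - sum c V = r" using r(2) by simp
  then have "emeasure lborel (bary_ge_set V c) = ennreal (r ^ DIM('a)) * emeasure lborel (convex hull V)"
    using emeasure_bary_ge_set[OF V c] r(1) by simp
  then show ?thesis using r(1) by (simp add: measure_def enn2real_mult)
qed

lemma bary_ge_set_subset_convex_hull:
  "is_simplex V \<Longrightarrow> (\<And>R. 0 \<le> c R) \<Longrightarrow> bary_ge_set V c \<subseteq> convex hull V"
  by (auto simp: bary_ge_set_def convex_hull_simplex_eq intro: order_trans)

section \<open>Vertex permutations\<close>

definition vertex_permutation :: "'a::euclidean_space set \<Rightarrow> ('a \<Rightarrow> 'a) \<Rightarrow> 'a \<Rightarrow> 'a" where
  "vertex_permutation V p x = (\<Sum>Q\<in>V. bary V (p Q) x *\<^sub>R Q)"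

lemma bary_vertex_permutation:
  assumes V: "is_simplex V" and p: "p permutes V"
  shows "bary V Q (vertex_permutation V p x) = bary V (p Q) x"
proof -
  have "(\<Sum>Q\<in>V. bary V (p Q) x) = 1"
    using sum.permute[OF p, of "\<lambda>Q. bary V Q x"] sum_bary[OF V] by (simp add: comp_def)
  then show ?thesis
    using bary_sum_subset[OF V subset_refl, of "\<lambda>Q. bary V (p Q) x" Q]
      bary_outside[OF V] permutes_not_in[OF p, of Q]
    by (simp add: vertex_permutation_def split: if_splits)
qed

lemma continuous_on_vertex_permutation: "is_simplex V \<Longrightarrow> continuous_on S (vertex_permutation V p)"
  unfolding vertex_permutation_def by (intro continuous_intros continuous_on_bary)

lemma vertex_permutation_vimage_bary_ge_set:
  assumes V: "is_simplex V" and p: "p permutes V"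
  shows "vertex_permutation V p -` bary_ge_set V c = bary_ge_set V (c \<circ> inv p)"
proof -
  have "(\<forall>R\<in>V. c R \<le> bary V (p R) x) \<longleftrightarrow> (\<forall>Q\<in>V. c (inv p Q) \<le> bary V Q x)" for x
  proof
    assume "\<forall>R\<in>V. c R \<le> bary V (p R) x"
    then show "\<forall>Q\<in>V. c (inv p Q) \<le> bary V Q x"
      by (metis p permutes_in_image[OF permutes_inv[OF p]] permutes_inverses(1))
  next
    assume "\<forall>Q\<in>V. c (inv p Q) \<le> bary V Q x"
    then show "\<forall>R\<in>V. c R \<le> bary V (p R) x"
      by (metis p permutes_in_image permutes_inverses(2))
  qed
  then show ?thesis
    by (auto simp: bary_ge_set_def bary_vertex_permutation[OF V p])
qed

lemma bary_bounded_below: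
  assumes V: "is_simplex V"
  obtains n :: nat where "\<forall>Q\<in>V. - real n \<le> bary V Q x"
proof -
  obtain n :: nat where n: "(\<Sum>Q\<in>V. \<bar>bary V Q x\<bar>) \<le> real n" using real_arch_simple by blast
  have "\<bar>bary V Q x\<bar> \<le> (\<Sum>Q\<in>V. \<bar>bary V Q x\<bar>)" if "Q \<in> V" for Q
    by (rule member_le_sum[OF that _ is_simplex_finite[OF V]]) simp
  then show ?thesis using n by (intro that[of n]) force
qed

lemma Int_stable_bary_ge_set: "Int_stable (range (bary_ge_set V))"
proof (rule Int_stableI)
  fix a b assume "a \<in> range (bary_ge_set V)" "b \<in> range (bary_ge_set V)"
  then obtain c c' where "a = bary_ge_set V c" "b = bary_ge_set V c'" by blast
  then show "a \<inter> b \<in> range (bary_ge_set V)" by (simp add: bary_ge_set_Int)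
qed

lemma UN_bary_ge_set_eq_UNIV:
  assumes V: "is_simplex V"
  shows "(\<Union>i::nat. bary_ge_set V (\<lambda>_. - real i)) = UNIV"
proof -
  have "x \<in> (\<Union>i. bary_ge_set V (\<lambda>_. - real i))" for x
  proof -
    obtain n :: nat where "\<forall>Q\<in>V. - real n \<le> bary V Q x" by (rule bary_bounded_below[OF V])
    then show ?thesis by (auto simp: bary_ge_set_def)
  qed
  then show ?thesis by blast
qed

lemma borel_eq_sigma_bary_ge_set:
  assumes V: "is_simplex (V::'a::euclidean_space set)"
  shows "borel = sigma UNIV (range (bary_ge_set V))"
proof (rule borel_eq_sigmaI1[OF borel_eq_halfspace_ge])
  show "bary_ge_set V c \<in> sets borel" for c using closed_bary_ge_set[OF V] by simp
next
  fix X assume "X \<in> (\<lambda>(a, i). {x::'a. a \<le> x \<bullet> i}) ` (UNIV \<times> Basis)"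
  then obtain a i where X: "X = {x::'a. a \<le> x \<bullet> i}" by auto
  let ?M = "sigma UNIV (range (bary_ge_set V))"
  have meas: "bary V R \<in> borel_measurable ?M" if R: "R \<in> V" for R
  proof (rule borel_measurableI_ge)
    fix y
    have "{x \<in> space ?M. y \<le> bary V R x} = (\<Union>n. bary_ge_set V (\<lambda>Q. if Q = R then y else - real n))"
    proof (intro set_eqI iffI)
      fix x assume x: "x \<in> {x \<in> space ?M. y \<le> bary V R x}"
      obtain n :: nat where n: "\<forall>Q\<in>V. - real n \<le> bary V Q x" using bary_bounded_below[OF V] by blast
      have "x \<in> bary_ge_set V (\<lambda>Q. if Q = R then y else - real n)"
        using x n by (auto simp: bary_ge_set_def)
      then show "x \<in> (\<Union>n. bary_ge_set V (\<lambda>Q. if Q = R then y else - real n))" by blast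
    next
      fix x assume "x \<in> (\<Union>n. bary_ge_set V (\<lambda>Q. if Q = R then y else - real n))"
      then show "x \<in> {x \<in> space ?M. y \<le> bary V R x}" using R by (auto simp: bary_ge_set_def)
    qed
    also have "\<dots> \<in> sets ?M" by (intro sets.countable_UN) auto
    finally show "{x \<in> space ?M. y \<le> bary V R x} \<in> sets ?M" .
  qed
  have "(\<lambda>x::'a. x \<bullet> i) = (\<lambda>x. \<Sum>R\<in>V. bary V R x * (R \<bullet> i))"
  proof
    fix x :: 'a
    have "x \<bullet> i = (\<Sum>R\<in>V. bary V R x *\<^sub>R R) \<bullet> i" using sum_bary_scaleR[OF V, of x] by simp
    then show "x \<bullet> i = (\<Sum>R\<in>V. bary V R x * (R \<bullet> i))" by (simp add: inner_sum_left)
  qed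
  then have "(\<lambda>x::'a. x \<bullet> i) \<in> borel_measurable ?M"
    using meas by (simp add: borel_measurable_sum borel_measurable_times)
  then have "{x \<in> space ?M. a \<le> x \<bullet> i} \<in> sets ?M" unfolding borel_measurable_iff_ge by blast
  then show "X \<in> sets ?M" using X by simp
qed

definition simplex_measure :: "'a::euclidean_space set \<Rightarrow> 'a measure" where
  "simplex_measure V = density lborel (\<lambda>x. ennreal (indicator (convex hull V) x))"

lemma sets_simplex_measure [simp]: "sets (simplex_measure V) = sets borel"
  by (simp add: simplex_measure_def)

lemma convex_hull_simplex_borel: "is_simplex V \<Longrightarrow> convex hull V \<in> sets borel"
  by (simp add: compact_imp_closed compact_convex_hull_simplex)

lemma emeasure_simplex_measure_bary_ge_set:
  assumes V: "is_simplex (V::'a::euclidean_space set)"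
  shows "emeasure (simplex_measure V) (bary_ge_set V c) =
    ennreal ((max 0 (1 - (\<Sum>R\<in>V. max (c R) 0))) ^ DIM('a)) * emeasure lborel (convex hull V)"
proof -
  define c' where "c' = (\<lambda>R. if R \<in> V then max (c R) 0 else 0)"
  have hull: "convex hull V \<in> sets borel" and ge: "bary_ge_set V c \<in> sets borel"
    using convex_hull_simplex_borel[OF V] closed_bary_ge_set[OF V] by simp_all
  have "emeasure (simplex_measure V) (bary_ge_set V c)
      = (\<integral>\<^sup>+ x. ennreal (indicator (convex hull V) x) * indicator (bary_ge_set V c) x \<partial>lborel)"
    unfolding simplex_measure_def using hull ge by (subst emeasure_density) auto
  also have "\<dots> = (\<integral>\<^sup>+ x. indicator (convex hull V \<inter> bary_ge_set V c) x \<partial>lborel)"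
    by (rule nn_integral_cong) (auto split: split_indicator)
  also have "\<dots> = emeasure lborel (convex hull V \<inter> bary_ge_set V c)"
    using hull ge by (simp add: nn_integral_indicator)
  also have "convex hull V \<inter> bary_ge_set V c = bary_ge_set V c'"
    unfolding convex_hull_Int_bary_ge_set[OF V] by (auto simp: bary_ge_set_def c'_def)
  also have "emeasure lborel (bary_ge_set V c')
      = ennreal ((max 0 (1 - sum c' V)) ^ DIM('a)) * emeasure lborel (convex hull V)"
    by (rule emeasure_bary_ge_set[OF V]) (simp add: c'_def)
  also have "sum c' V = (\<Sum>R\<in>V. max (c R) 0)" by (rule sum.cong) (auto simp: c'_def)
  finally show ?thesis .
qed

text \<open>Both measures agree on the generator \<open>bary_ge_set V\<close>, whose measure only depends on the
  multiset of thresholds.\<close>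

lemma distr_simplex_measure_vertex_permutation:
  assumes V: "is_simplex (V::'a::euclidean_space set)" and p: "p permutes V"
  shows "distr (simplex_measure V) borel (vertex_permutation V p) = simplex_measure V"
proof -
  let ?\<sigma> = "vertex_permutation V p"
  have meas: "?\<sigma> \<in> measurable (simplex_measure V) borel"
    unfolding simplex_measure_def using continuous_on_vertex_permutation[OF V]
    by (simp add: borel_measurable_continuous_onI)
  have sets_eq: "sets borel = sigma_sets UNIV (range (bary_ge_set V))"
    by (subst borel_eq_sigma_bary_ge_set[OF V]) simp
  have finite_hull: "emeasure lborel (convex hull V) < \<infinity>"
    by (rule emeasure_compact_finite[OF compact_convex_hull_simplex[OF V]])
  have "simplex_measure V = distr (simplex_measure V) borel ?\<sigma>"
  proof (rule measure_eqI_generator_eq[where E = "range (bary_ge_set V)" and \<Omega> = UNIV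
        and A = "\<lambda>i. bary_ge_set V (\<lambda>_. - real i)"])
    show "Int_stable (range (bary_ge_set V))" by (rule Int_stable_bary_ge_set)
    show "range (bary_ge_set V) \<subseteq> Pow UNIV" by simp
    show "sets (simplex_measure V) = sigma_sets UNIV (range (bary_ge_set V))"
      "sets (distr (simplex_measure V) borel ?\<sigma>) = sigma_sets UNIV (range (bary_ge_set V))"
      using sets_eq by simp_all
    show "range (\<lambda>i. bary_ge_set V (\<lambda>_. - real i)) \<subseteq> range (bary_ge_set V)" by auto
    show "(\<Union>i. bary_ge_set V (\<lambda>_. - real i)) = UNIV" by (rule UN_bary_ge_set_eq_UNIV[OF V])
    show "emeasure (simplex_measure V) (bary_ge_set V (\<lambda>_. - real i)) \<noteq> \<infinity>" for i
      using finite_hull by (simp add: emeasure_simplex_measure_bary_ge_set[OF V] ennreal_mult_eq_top_iff)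
    fix X assume "X \<in> range (bary_ge_set V)"
    then obtain c where X: "X = bary_ge_set V c" by blast
    have "emeasure (distr (simplex_measure V) borel ?\<sigma>) X
        = emeasure (simplex_measure V) (?\<sigma> -` X \<inter> space (simplex_measure V))"
      using X closed_bary_ge_set[OF V] meas by (subst emeasure_distr) auto
    also have "\<dots> = emeasure (simplex_measure V) (bary_ge_set V (c \<circ> inv p))"
      using vertex_permutation_vimage_bary_ge_set[OF V p] by (simp add: X simplex_measure_def)
    also have "\<dots> = emeasure (simplex_measure V) X"
      unfolding X emeasure_simplex_measure_bary_ge_set[OF V]
      using sum.permute[OF permutes_inv[OF p], of "\<lambda>R. max (c R) 0"] by (simp add: comp_def)
    finally show "emeasure (simplex_measure V) X = emeasure (distr (simplex_measure V) borel ?\<sigma>) X"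
      by simp
  qed
  then show ?thesis by simp
qed

lemma integral_simplex_vertex_permutation:
  assumes V: "is_simplex (V::'a::euclidean_space set)" and p: "p permutes V"
    and F: "(F :: 'a \<Rightarrow> real) \<in> borel_measurable borel"
  shows "(\<integral>x. indicator (convex hull V) x * F (vertex_permutation V p x) \<partial>lborel)
       = (\<integral>x. indicator (convex hull V) x * F x \<partial>lborel)"
proof -
  let ?\<sigma> = "vertex_permutation V p"
  have \<sigma>: "?\<sigma> \<in> borel_measurable borel"
    using continuous_on_vertex_permutation[OF V] by (simp add: borel_measurable_continuous_onI)
  have lborel_eq: "integral\<^sup>L (simplex_measure V) G = (\<integral>x. indicator (convex hull V) x * G x \<partial>lborel)"
    if "G \<in> borel_measurable borel" for G :: "'a \<Rightarrow> real"
    using that convex_hull_simplex_borel[OF V] by (simp add: simplex_measure_def integral_density)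
  have "(\<integral>x. indicator (convex hull V) x * F (?\<sigma> x) \<partial>lborel) = integral\<^sup>L (simplex_measure V) (\<lambda>x. F (?\<sigma> x))"
    using lborel_eq[of "\<lambda>x. F (?\<sigma> x)"] F \<sigma> by (simp add: measurable_compose)
  also have "\<dots> = integral\<^sup>L (distr (simplex_measure V) borel ?\<sigma>) F"
    using F \<sigma> by (subst integral_distr) (auto simp: simplex_measure_def)
  also have "\<dots> = (\<integral>x. indicator (convex hull V) x * F x \<partial>lborel)"
    using distr_simplex_measure_vertex_permutation[OF V p] lborel_eq[OF F] by simp
  finally show ?thesis .
qed

section \<open>Dual sub-regions\<close>

lemma dual_sub_subset: "dual_sub V P \<subseteq> convex hull V"
  unfolding dual_sub_def by auto

lemma compact_dual_sub:
  assumes V: "is_simplex V"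
  shows "compact (dual_sub V P)"
proof -
  have "dual_sub V P = convex hull V \<inter> (\<Inter>Q\<in>V. {x. bary V Q x \<le> bary V P x})"
    unfolding dual_sub_def by auto
  moreover have "closed {x. bary V Q x \<le> bary V P x}" for Q
    by (rule closed_Collect_le) (auto intro: continuous_on_bary[OF V])
  ultimately show ?thesis using compact_convex_hull_simplex[OF V] by (simp add: compact_Int_closed closed_INT)
qed

lemma vertex_permutation_in_dual_sub_iff:
  assumes V: "is_simplex V" and p: "p permutes V"
  shows "vertex_permutation V p x \<in> dual_sub V P \<longleftrightarrow> x \<in> dual_sub V (p P)"
proof -
  have all_p: "(\<forall>Q\<in>V. \<phi> (p Q)) \<longleftrightarrow> (\<forall>Q\<in>V. \<phi> Q)" for \<phi>
  proof -
    have "(\<forall>Q\<in>V. \<phi> (p Q)) \<longleftrightarrow> (\<forall>Q\<in>p ` V. \<phi> Q)" by blast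
    then show ?thesis by (simp only: permutes_image[OF p])
  qed
  have "vertex_permutation V p x \<in> dual_sub V P \<longleftrightarrow>
        (\<forall>Q\<in>V. 0 \<le> bary V (p Q) x) \<and> (\<forall>Q\<in>V. bary V (p Q) x \<le> bary V (p P) x)"
    unfolding dual_sub_def convex_hull_simplex_eq[OF V] by (simp add: bary_vertex_permutation[OF V p])
  also have "\<dots> \<longleftrightarrow> (\<forall>Q\<in>V. 0 \<le> bary V Q x) \<and> (\<forall>Q\<in>V. bary V Q x \<le> bary V (p P) x)"
    using all_p[of "\<lambda>Q. 0 \<le> bary V Q x"] all_p[of "\<lambda>Q. bary V Q x \<le> bary V (p P) x"] by simp
  also have "\<dots> \<longleftrightarrow> x \<in> dual_sub V (p P)"
    unfolding dual_sub_def convex_hull_simplex_eq[OF V] by simp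
  finally show ?thesis .
qed

lemma integral_dual_sub_vertex_permutation:
  assumes V: "is_simplex (V::'a::euclidean_space set)" and p: "p permutes V"
    and g: "(g :: 'a \<Rightarrow> real) \<in> borel_measurable borel"
  shows "(\<integral>x. indicator (dual_sub V (p P)) x * g (vertex_permutation V p x) \<partial>lborel)
       = (\<integral>x. indicator (dual_sub V P) x * g x \<partial>lborel)"
proof -
  let ?K = "convex hull V"
  define F where "F = (\<lambda>x. indicator (dual_sub V P) x * g x)"
  have F: "F \<in> borel_measurable borel"
    unfolding F_def using g compact_dual_sub[OF V, of P] by (simp add: compact_imp_closed)
  have "(\<integral>x. indicator (dual_sub V (p P)) x * g (vertex_permutation V p x) \<partial>lborel)
      = (\<integral>x. indicator ?K x * F (vertex_permutation V p x) \<partial>lborel)"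
    using dual_sub_subset[of V "p P"]
    by (intro Bochner_Integration.integral_cong)
      (auto simp: F_def vertex_permutation_in_dual_sub_iff[OF V p] split: split_indicator)
  also have "\<dots> = (\<integral>x. indicator ?K x * F x \<partial>lborel)"
    by (rule integral_simplex_vertex_permutation[OF V p F])
  also have "\<dots> = (\<integral>x. F x \<partial>lborel)"
    using dual_sub_subset[of V P]
    by (intro Bochner_Integration.integral_cong) (auto simp: F_def split: split_indicator)
  finally show ?thesis by (simp add: F_def)
qed

lemma integral_dual_sub_bary_permute:
  assumes V: "is_simplex (V::'a::euclidean_space set)" and p: "p permutes V"
  shows "(\<integral>x. indicator (dual_sub V (p P)) x * bary V (p Q) x \<partial>lborel)
       = (\<integral>x. indicator (dual_sub V P) x * bary V Q x \<partial>lborel)"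
  using integral_dual_sub_vertex_permutation[OF V p, of "bary V Q" P] continuous_on_bary[OF V]
  by (simp add: bary_vertex_permutation[OF V p] borel_measurable_continuous_onI)

lemma AE_bary_distinct:
  assumes V: "is_simplex (V::'a::euclidean_space set)"
  shows "AE x in lborel. \<forall>P\<in>V. \<forall>Q\<in>V. P \<noteq> Q \<longrightarrow> bary V P x \<noteq> bary V Q x"
proof -
  let ?N = "\<Union>P\<in>V. \<Union>Q\<in>V - {P}. {x. bary V P x = bary V Q x}"
  have "negligible ?N"
    using is_simplex_finite[OF V] negligible_bary_eq[OF V]
    by (intro negligible_Union negligible_Union) auto
  then have "\<exists>N\<in>null_sets lborel. ?N \<subseteq> N"
    unfolding negligible_iff_null_sets by (rule null_sets_completion_iff2[THEN iffD1])
  then obtain N where N: "N \<in> null_sets lborel" "?N \<subseteq> N" by blast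
  show ?thesis using AE_not_in[OF N(1)] by (rule eventually_mono) (use N(2) in blast)
qed

lemma sum_indicator_dual_sub:
  assumes V: "is_simplex V" and x: "\<forall>P\<in>V. \<forall>Q\<in>V. P \<noteq> Q \<longrightarrow> bary V P x \<noteq> bary V Q x"
  shows "(\<Sum>P\<in>V. indicator (dual_sub V P) x) = (indicator (convex hull V) x :: real)"
proof (cases "x \<in> convex hull V")
  case False
  then have "indicator (dual_sub V P) x = (0::real)" for P
    using dual_sub_subset[of V P] by (auto simp: indicator_def)
  then show ?thesis using False by simp
next
  case True
  have fin: "finite V" by (rule is_simplex_finite[OF V])
  have "V \<noteq> {}" using V unfolding is_simplex_def by auto
  then have "Max ((\<lambda>R. bary V R x) ` V) \<in> (\<lambda>R. bary V R x) ` V" using fin by simp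
  then obtain P0 where P0: "P0 \<in> V" "bary V P0 x = Max ((\<lambda>R. bary V R x) ` V)"
    by (metis (no_types, lifting) imageE)
  have le: "bary V Q x \<le> bary V P0 x" if "Q \<in> V" for Q
    unfolding P0(2) by (rule Max_ge) (use fin that in auto)
  have "x \<in> dual_sub V P0" using True le unfolding dual_sub_def by blast
  moreover have "x \<notin> dual_sub V P" if P: "P \<in> V" "P \<noteq> P0" for P
  proof
    assume "x \<in> dual_sub V P"
    then have "bary V P0 x \<le> bary V P x" using P0(1) unfolding dual_sub_def by blast
    then have "bary V P x = bary V P0 x" using le[OF P(1)] by simp
    then show False using x P P0(1) by blast
  qed
  ultimately have "(\<Sum>P\<in>V. indicator (dual_sub V P) x) = (\<Sum>P\<in>V. if P = P0 then 1 else (0::real))"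
    by (intro sum.cong) (auto simp: indicator_def)
  also have "\<dots> = 1" using fin P0(1) by simp
  finally show ?thesis using True by simp
qed

lemma integral_convex_hull_eq_sum_dual_sub:
  fixes F :: "'a::euclidean_space \<Rightarrow> real"
  assumes V: "is_simplex (V::'a set)" and F: "continuous_on UNIV F"
  shows "(\<integral>x. indicator (convex hull V) x * F x \<partial>lborel)
       = (\<Sum>P\<in>V. (\<integral>x. indicator (dual_sub V P) x * F x \<partial>lborel))"
proof -
  have Fb: "F \<in> borel_measurable borel" using F by (rule borel_measurable_continuous_onI)
  have "(\<integral>x. indicator (convex hull V) x * F x \<partial>lborel)
      = (\<integral>x. (\<Sum>P\<in>V. indicator (dual_sub V P) x * F x) \<partial>lborel)"
  proof (rule integral_cong_AE)
    show "(\<lambda>x. indicator (convex hull V) x * F x) \<in> borel_measurable lborel"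
      using Fb convex_hull_simplex_borel[OF V] by simp
    show "(\<lambda>x. \<Sum>P\<in>V. indicator (dual_sub V P) x * F x) \<in> borel_measurable lborel"
      using Fb compact_dual_sub[OF V] by (simp add: compact_imp_closed)
    show "AE x in lborel. indicator (convex hull V) x * F x = (\<Sum>P\<in>V. indicator (dual_sub V P) x * F x)"
      using AE_bary_distinct[OF V] by (rule eventually_mono)
        (simp add: sum_indicator_dual_sub[OF V, symmetric] sum_distrib_right)
  qed
  also have "\<dots> = (\<Sum>P\<in>V. (\<integral>x. indicator (dual_sub V P) x * F x \<partial>lborel))"
    using compact_dual_sub[OF V] continuous_on_subset[OF F]
    by (intro Bochner_Integration.integral_sum integrable_indicator_mult_continuous) auto
  finally show ?thesis .
qed

section \<open>Alternating sums over subsets\<close>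

lemma sum_Pow_insert:
  assumes "finite A" "a \<notin> A"
  shows "(\<Sum>S\<in>Pow (insert a A). g S) = (\<Sum>S\<in>Pow A. g S) + (\<Sum>T\<in>Pow A. g (insert a T))"
proof -
  have "inj_on (insert a) (Pow A)"
    using assms unfolding inj_on_def by (metis Pow_iff insert_ident subset_iff)
  moreover have "Pow A \<inter> insert a ` Pow A = {}" using assms by auto
  ultimately show ?thesis
    using assms by (simp add: Pow_insert sum.union_disjoint sum.reindex)
qed

lemma sum_Pow_split_empty:
  assumes "finite A"
  shows "(\<Sum>T\<in>Pow A. g T) = g {} + (\<Sum>T\<in>Pow A - {{}}. g T)"
  using assms by (simp add: sum.remove[of "Pow A" "{}"])

lemma sum_Pow_insert_nonempty:
  assumes "finite A" "a \<notin> A"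
  shows "(\<Sum>S\<in>Pow (insert a A) - {{}}. g S) = (\<Sum>S\<in>Pow A - {{}}. g S) + (\<Sum>T\<in>Pow A. g (insert a T))"
proof -
  have eq: "Pow (insert a A) - {{}} = (Pow A - {{}}) \<union> insert a ` Pow A"
    by (auto simp: Pow_insert)
  have disj: "(Pow A - {{}}) \<inter> insert a ` Pow A = {}" using assms by auto
  have inj: "inj_on (insert a) (Pow A)"
    using assms unfolding inj_on_def by (metis Pow_iff insert_ident subset_iff)
  have "(\<Sum>S\<in>Pow (insert a A) - {{}}. g S) = (\<Sum>S\<in>Pow A - {{}}. g S) + (\<Sum>S\<in>insert a ` Pow A. g S)"
    unfolding eq using assms disj by (intro sum.union_disjoint) auto
  also have "(\<Sum>S\<in>insert a ` Pow A. g S) = (\<Sum>T\<in>Pow A. g (insert a T))"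
    using sum.reindex[OF inj] by simp
  finally show ?thesis .
qed

lemma sum_alternating_Min_eq_Max:
  fixes f :: "'a \<Rightarrow> real"
  assumes "finite A"
  shows "(\<Sum>S\<in>Pow A - {{}}. (-1) ^ (card S + 1) * Min (f ` S)) = (if A = {} then 0 else Max (f ` A))"
  using assms
proof (induction A arbitrary: f rule: finite_induct)
  case empty
  then show ?case by simp
next
  case (insert a A)
  let ?alt = "\<lambda>f A. \<Sum>S\<in>Pow A - {{}}. (-1) ^ (card S + 1) * Min (f ` S)"
  define g where "g = (\<lambda>x. min (f a) (f x))"
  have mono_min: "mono (min (f a))" by (rule monoI) (simp add: min.coboundedI2 min_le_iff_disj)
  have step: "(-1) ^ (card (insert a T) + 1) * Min (f ` insert a T) = - ((-1) ^ (card T + 1) * Min (g ` T))"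
    if "T \<in> Pow A - {{}}" for T
  proof -
    have T: "finite T" "T \<noteq> {}" "a \<notin> T" using that insert finite_subset by auto
    have "Min (f ` insert a T) = min (f a) (Min (f ` T))" using T by (simp add: Min_insert)
    also have "\<dots> = Min (g ` T)"
      using mono_Min_commute[OF mono_min, of "f ` T"] T by (simp add: g_def image_image)
    finally show ?thesis using T by simp
  qed
  have "(\<Sum>T\<in>Pow A. (-1) ^ (card (insert a T) + 1) * Min (f ` insert a T))
      = f a + (\<Sum>T\<in>Pow A - {{}}. (-1) ^ (card (insert a T) + 1) * Min (f ` insert a T))"
    by (subst sum_Pow_split_empty[OF insert(1)]) simp
  also have "(\<Sum>T\<in>Pow A - {{}}. (-1) ^ (card (insert a T) + 1) * Min (f ` insert a T))
      = (\<Sum>T\<in>Pow A - {{}}. - ((-1) ^ (card T + 1) * Min (g ` T)))"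
    by (rule sum.cong[OF refl step])
  finally have "(\<Sum>T\<in>Pow A. (-1) ^ (card (insert a T) + 1) * Min (f ` insert a T)) = f a - ?alt g A"
    by (simp add: sum_negf)
  moreover have "?alt f (insert a A)
      = ?alt f A + (\<Sum>T\<in>Pow A. (-1) ^ (card (insert a T) + 1) * Min (f ` insert a T))"
    by (rule sum_Pow_insert_nonempty[OF insert(1,2)])
  ultimately have "?alt f (insert a A) = ?alt f A + (f a - ?alt g A)" by simp
  also have "\<dots> = Max (f ` insert a A)"
  proof (cases "A = {}")
    case False
    have "Max (g ` A) = min (f a) (Max (f ` A))"
      using mono_Max_commute[OF mono_min, of "f ` A"] False insert(1) by (simp add: g_def image_image)
    then show ?thesis
      using insert.IH[of f] insert.IH[of g] False insert(1) by (simp add: Max_insert max_def min_def)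
  qed (simp add: insert.IH)
  finally show ?case by simp
qed

lemma fact_div_pochhammer_diff:
  fixes j :: real
  assumes "j > 0"
  shows "fact n / pochhammer j (Suc n) - fact n / pochhammer (j + 1) (Suc n)
    = fact (Suc n) / pochhammer j (Suc (Suc n))"
proof -
  define X where "X = pochhammer j (Suc n)"
  define Y where "Y = pochhammer (j + 1) (Suc n)"
  have X: "X > 0" and Y: "Y > 0" using assms by (simp_all add: X_def Y_def pochhammer_pos)
  have jY: "pochhammer j (Suc (Suc n)) = j * Y" unfolding Y_def by (rule pochhammer_rec)
  have mX: "j * Y = (j + real (Suc n)) * X"
    unfolding X_def jY[symmetric] by (rule pochhammer_rec')
  have "fact n / X - fact n / Y = (fact n * (j + real (Suc n)) - fact n * j) / (j * Y)"
    using X Y assms by (simp add: mX diff_divide_distrib frac_eq_eq)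
  also have "fact n * (j + real (Suc n)) - fact n * j = fact (Suc n)" by (simp add: algebra_simps)
  finally show ?thesis by (simp add: X_def Y_def jY)
qed

lemma sum_Pow_alternating_inverse:
  assumes "finite A" "j > 0"
  shows "(\<Sum>T\<in>Pow A. (-1) ^ card T / (real (card T) + j)) = fact (card A) / pochhammer j (Suc (card A))"
  using assms
proof (induction A arbitrary: j rule: finite_induct)
  case empty
  then show ?case by (simp add: pochhammer_Suc)
next
  case (insert a A)
  let ?alt = "\<lambda>j. \<Sum>T\<in>Pow A. (-1) ^ card T / (real (card T) + j)"
  define n where "n = card A"
  have step: "(-1) ^ card (insert a T) / (real (card (insert a T)) + j) = - ((-1) ^ card T / (real (card T) + (j + 1)))"
    if "T \<in> Pow A" for T
  proof -
    have "finite T" "a \<notin> T" using that insert finite_subset by auto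
    then show ?thesis by (simp add: algebra_simps)
  qed
  have "(\<Sum>T\<in>Pow (insert a A). (-1) ^ card T / (real (card T) + j))
      = ?alt j + (\<Sum>T\<in>Pow A. (-1) ^ card (insert a T) / (real (card (insert a T)) + j))"
    by (rule sum_Pow_insert[OF insert(1,2)])
  also have "(\<Sum>T\<in>Pow A. (-1) ^ card (insert a T) / (real (card (insert a T)) + j))
      = (\<Sum>T\<in>Pow A. - ((-1) ^ card T / (real (card T) + (j + 1))))"
    by (rule sum.cong[OF refl step])
  also have "\<dots> = - ?alt (j + 1)" by (simp add: sum_negf)
  also have "?alt j + - ?alt (j + 1) = fact n / pochhammer j (Suc n) - fact n / pochhammer (j + 1) (Suc n)"
    using insert.IH[of j] insert.IH[of "j + 1"] insert.prems by (simp add: n_def)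
  also have "\<dots> = fact (Suc n) / pochhammer j (Suc (Suc n))"
    by (rule fact_div_pochhammer_diff[OF insert.prems])
  finally show ?case using insert by (simp add: n_def)
qed

lemma sum_Pow_alternating_inverse_card:
  assumes "finite A"
  shows "(\<Sum>S\<in>Pow A - {{}}. (-1) ^ (card S + 1) / real (card S)) = harm (card A)"
  using assms
proof (induction A rule: finite_induct)
  case empty
  then show ?case by (simp add: harm_def)
next
  case (insert a A)
  have step: "(-1) ^ (card (insert a T) + 1) / real (card (insert a T)) = (-1) ^ card T / (real (card T) + 1)"
    if "T \<in> Pow A" for T
  proof -
    have "finite T" "a \<notin> T" using that insert finite_subset by auto
    then show ?thesis by (simp add: algebra_simps)
  qed
  have "(\<Sum>S\<in>Pow (insert a A) - {{}}. (-1) ^ (card S + 1) / real (card S))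
      = (\<Sum>S\<in>Pow A - {{}}. (-1) ^ (card S + 1) / real (card S))
        + (\<Sum>T\<in>Pow A. (-1) ^ (card (insert a T) + 1) / real (card (insert a T)))"
    by (rule sum_Pow_insert_nonempty[OF insert(1,2)])
  also have "(\<Sum>T\<in>Pow A. (-1) ^ (card (insert a T) + 1) / real (card (insert a T)))
      = (\<Sum>T\<in>Pow A. (-1) ^ card T / (real (card T) + 1))"
    by (rule sum.cong[OF refl step])
  also have "\<dots> = fact (card A) / pochhammer 1 (Suc (card A))"
    using sum_Pow_alternating_inverse[OF insert(1), of 1] by simp
  also have "\<dots> = 1 / real (Suc (card A))"
    by (simp add: pochhammer_fact[symmetric] del: of_nat_Suc)
  finally show ?case using insert by (simp add: harm_def)
qed

section \<open>Integrals of the minimum and maximum of barycentric coordinates\<close>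

definition bary_min :: "'a::euclidean_space set \<Rightarrow> 'a set \<Rightarrow> 'a \<Rightarrow> real" where
  "bary_min V S x = Min ((\<lambda>R. bary V R x) ` S)"

lemma continuous_on_Min_image:
  fixes f :: "'r \<Rightarrow> 'x::topological_space \<Rightarrow> real"
  assumes "finite S" "S \<noteq> {}" "\<And>R. R \<in> S \<Longrightarrow> continuous_on U (f R)"
  shows "continuous_on U (\<lambda>x. Min ((\<lambda>R. f R x) ` S))"
  using assms
proof (induction S rule: finite_ne_induct)
  case (insert a A)
  then show ?case by (simp add: Min_insert continuous_on_min)
qed simp

lemma continuous_on_Max_image:
  fixes f :: "'r \<Rightarrow> 'x::topological_space \<Rightarrow> real"
  assumes "finite S" "S \<noteq> {}" "\<And>R. R \<in> S \<Longrightarrow> continuous_on U (f R)"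
  shows "continuous_on U (\<lambda>x. Max ((\<lambda>R. f R x) ` S))"
  using assms
proof (induction S rule: finite_ne_induct)
  case (insert a A)
  then show ?case by (simp add: Max_insert continuous_on_max)
qed simp

lemma continuous_on_bary_min:
  assumes V: "is_simplex V" and S: "S \<subseteq> V" "S \<noteq> {}"
  shows "continuous_on U (bary_min V S)"
  unfolding bary_min_def using S finite_subset[OF S(1) is_simplex_finite[OF V]]
  by (intro continuous_on_Min_image continuous_on_bary[OF V]) auto

lemma Min_image_affine:
  fixes f g :: "'x \<Rightarrow> real"
  assumes "finite S" "S \<noteq> {}" "r \<ge> 0" "\<And>R. R \<in> S \<Longrightarrow> g R = t + r * f R"
  shows "Min (g ` S) = t + r * Min (f ` S)"
proof -
  have "mono (\<lambda>z::real. t + r * z)" using assms(3) by (auto intro!: monoI mult_left_mono)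
  then have "t + r * Min (f ` S) = Min ((\<lambda>z. t + r * z) ` f ` S)"
    by (rule mono_Min_commute) (use assms in auto)
  also have "(\<lambda>z. t + r * z) ` f ` S = g ` S" using assms(4) by (auto simp: image_image)
  finally show ?thesis by simp
qed

lemma bary_min_outside_bary_ge_set:
  assumes V: "is_simplex V" and S: "S \<subseteq> V" "S \<noteq> {}"
    and x: "x \<in> convex hull V" "x \<notin> bary_ge_set V (\<lambda>R. if R \<in> S then t else 0)"
  shows "0 \<le> bary_min V S x" "bary_min V S x \<le> t"
proof -
  have finS: "finite S" using finite_subset[OF S(1) is_simplex_finite[OF V]] .
  have nonneg: "\<forall>R\<in>V. 0 \<le> bary V R x" using x(1) convex_hull_simplex_eq[OF V] by auto
  then show "0 \<le> bary_min V S x" unfolding bary_min_def using finS S by (auto simp: Min_ge_iff)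
  from x(2) obtain R where R: "R \<in> V" "bary V R x < (if R \<in> S then t else 0)"
    unfolding bary_ge_set_def by auto
  have "R \<in> S"
  proof (rule ccontr)
    assume "R \<notin> S"
    then show False using R nonneg by (simp add: not_le[symmetric])
  qed
  then have "bary_min V S x \<le> bary V R x" unfolding bary_min_def using finS by simp
  then show "bary_min V S x \<le> t" using R \<open>R \<in> S\<close> by simp
qed

text \<open>Pulled back to the simplex by the homothety onto the corner \<open>bary_ge_set V c\<close>, the minimum
  becomes \<open>t\<close> plus \<open>r\<close> times itself.\<close>

lemma integral_bary_min_corner:
  assumes V: "is_simplex (V::'a::euclidean_space set)" and S: "S \<subseteq> V" "S \<noteq> {}"
    and c: "\<forall>v. v \<notin> V \<longrightarrow> c v = 0" "\<forall>R\<in>S. c R = t" and r: "0 < r" "sum c V + r = 1"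
  shows "(\<integral>x. indicator (bary_ge_set V c) x * bary_min V S x \<partial>lborel)
    = r ^ DIM('a) * (t * measure lborel (convex hull V)
        + r * (\<integral>x. indicator (convex hull V) x * bary_min V S x \<partial>lborel))"
proof -
  let ?K = "convex hull V" and ?h = "\<lambda>y. (\<Sum>v\<in>V. c v *\<^sub>R v) + r *\<^sub>R y"
  have bary_h: "bary V R (?h y) = c R + r * bary V R y" for R y
    by (rule bary_affine_combination[OF V c(1) r(2)])
  have ind: "indicator (bary_ge_set V c) (?h y) = (indicator ?K y :: real)" for y
    using r(1) by (simp add: bary_ge_set_def convex_hull_simplex_eq[OF V] bary_h zero_le_mult_iff indicator_def)
  have min: "bary_min V S (?h y) = t + r * bary_min V S y" for y
    unfolding bary_min_def using finite_subset[OF S(1) is_simplex_finite[OF V]] S(2) r(1) c(2)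
    by (intro Min_image_affine) (auto simp: bary_h)
  have K: "compact ?K" by (rule compact_convex_hull_simplex[OF V])
  have cont: "continuous_on U (bary_min V S)" for U by (rule continuous_on_bary_min[OF V S])
  have meas: "(\<lambda>x. indicator (bary_ge_set V c) x * bary_min V S x) \<in> borel_measurable borel"
    using closed_bary_ge_set[OF V] cont
    by (intro borel_measurable_times borel_measurable_indicator borel_measurable_continuous_onI) auto
  have "(\<integral>x. indicator (bary_ge_set V c) x * bary_min V S x \<partial>lborel)
      = r ^ DIM('a) * (\<integral>y. indicator (bary_ge_set V c) (?h y) * bary_min V S (?h y) \<partial>lborel)"
    by (rule integral_lborel_homothety[OF r(1) meas])
  also have "(\<integral>y. indicator (bary_ge_set V c) (?h y) * bary_min V S (?h y) \<partial>lborel)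
      = (\<integral>y. t * indicator ?K y + r * (indicator ?K y * bary_min V S y) \<partial>lborel)"
    unfolding ind min by (simp add: algebra_simps)
  also have "\<dots> = t * measure lborel ?K + r * (\<integral>x. indicator ?K x * bary_min V S x \<partial>lborel)"
    using integrable_indicator_mult_continuous[OF K cont]
      integrable_indicator_mult_continuous[OF K continuous_on_const[of _ 1]] K
    by (simp add: compact_imp_closed borel_closed)
  finally show ?thesis .
qed

lemma integral_indicator_Diff_bounds:
  fixes f :: "'a::euclidean_space \<Rightarrow> real"
  assumes A: "compact A" and B: "compact B" "B \<subseteq> A" and f: "continuous_on A f"
    and bounds: "\<And>x. x \<in> A - B \<Longrightarrow> 0 \<le> f x \<and> f x \<le> t"
  shows "0 \<le> (\<integral>x. indicator A x * f x \<partial>lborel) - (\<integral>x. indicator B x * f x \<partial>lborel)"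
    and "(\<integral>x. indicator A x * f x \<partial>lborel) - (\<integral>x. indicator B x * f x \<partial>lborel)
      \<le> t * (measure lborel A - measure lborel B)"
proof -
  have int_A: "integrable lborel (\<lambda>x. indicator A x * f x)"
    and int_B: "integrable lborel (\<lambda>x. indicator B x * f x)"
    using integrable_indicator_mult_continuous[OF A f]
      integrable_indicator_mult_continuous[OF B(1) continuous_on_subset[OF f B(2)]] .
  have split: "(\<lambda>x. indicator A x * f x - indicator B x * f x) = (\<lambda>x. indicator (A - B) x * f x)"
    using B(2) by (intro ext) (auto split: split_indicator)
  have diff: "(\<integral>x. indicator A x * f x \<partial>lborel) - (\<integral>x. indicator B x * f x \<partial>lborel)
      = (\<integral>x. indicator (A - B) x * f x \<partial>lborel)"
    using Bochner_Integration.integral_diff[OF int_A int_B] unfolding split by simp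
  have int_diff: "integrable lborel (\<lambda>x. indicator (A - B) x * f x)"
    using Bochner_Integration.integrable_diff[OF int_A int_B] unfolding split .
  have pointwise: "0 \<le> indicator (A - B) x * f x" "indicator (A - B) x * f x \<le> t * indicator (A - B) x" for x
    using bounds[of x] by (auto split: split_indicator)
  have "emeasure lborel (A - B) \<le> emeasure lborel A"
    by (rule emeasure_mono) (use A in \<open>auto simp: compact_imp_closed borel_closed\<close>)
  then have "emeasure lborel (A - B) < \<infinity>" using emeasure_compact_finite[OF A] by order
  then have "(\<integral>x. indicator (A - B) x * f x \<partial>lborel) \<le> (\<integral>x. t * indicator (A - B) x \<partial>lborel)"
    using A B pointwise(2)
    by (intro integral_mono[OF int_diff]) (simp_all add: integrable_real_indicator compact_imp_closed borel_closed sets.Diff)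
  also have "\<dots> = t * (measure lborel A - measure lborel B)"
    using A B emeasure_compact_finite[OF A] by (simp add: measure_Diff compact_imp_closed borel_closed)
  finally show "(\<integral>x. indicator A x * f x \<partial>lborel) - (\<integral>x. indicator B x * f x \<partial>lborel)
      \<le> t * (measure lborel A - measure lborel B)" unfolding diff .
  show "0 \<le> (\<integral>x. indicator A x * f x \<partial>lborel) - (\<integral>x. indicator B x * f x \<partial>lborel)"
    unfolding diff using pointwise(1) by (simp add: Bochner_Integration.integral_nonneg)
qed

lemma integral_bary_min_bounds:
  assumes V: "is_simplex (V::'a::euclidean_space set)" and S: "S \<subseteq> V" "S \<noteq> {}"
    and r: "0 < r" "r < 1"
  defines "I \<equiv> (\<integral>x. indicator (convex hull V) x * bary_min V S x \<partial>lborel)"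
    and "m \<equiv> measure lborel (convex hull V)"
    and "t \<equiv> (1 - r) / real (card S)"
  shows "0 \<le> I - r ^ DIM('a) * (t * m + r * I)"
    and "I - r ^ DIM('a) * (t * m + r * I) \<le> t * (m - r ^ DIM('a) * m)"
proof -
  have fin: "finite V" by (rule is_simplex_finite[OF V])
  have finS: "finite S" using S fin finite_subset by blast
  have t: "t > 0" using r finS S by (simp add: t_def card_gt_0_iff)
  define c where "c = (\<lambda>R. if R \<in> S then t else 0)"
  have c: "\<forall>v. v \<notin> V \<longrightarrow> c v = 0" "\<forall>R\<in>S. c R = t" using S by (auto simp: c_def)
  have sum_c: "sum c V + r = 1"
    using sum.inter_restrict[OF fin, of "\<lambda>_. t" S] S finS t by (simp add: c_def Int_absorb1 t_def)
  have sub: "bary_ge_set V c \<subseteq> convex hull V"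
    using t by (intro bary_ge_set_subset_convex_hull[OF V]) (simp add: c_def)
  have K: "compact (convex hull V)" by (rule compact_convex_hull_simplex[OF V])
  then have "compact (bary_ge_set V c)"
    using sub closed_bary_ge_set[OF V] by (metis compact_Int_closed inf.absorb_iff2)
  note bounds = integral_indicator_Diff_bounds[OF K this sub continuous_on_bary_min[OF V S]]
  have "0 \<le> bary_min V S x \<and> bary_min V S x \<le> t" if "x \<in> convex hull V - bary_ge_set V c" for x
    using bary_min_outside_bary_ge_set[OF V S, of x t] that by (simp add: c_def)
  then show "0 \<le> I - r ^ DIM('a) * (t * m + r * I)"
    and "I - r ^ DIM('a) * (t * m + r * I) \<le> t * (m - r ^ DIM('a) * m)"
    using bounds[of t] integral_bary_min_corner[OF V S c r(1) sum_c]
      measure_bary_ge_set[OF V c(1) _ sum_c] r(1)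
    by (simp_all add: I_def m_def)
qed

lemma squeeze_geometric_sum_at_left_1:
  fixes a m :: real
  assumes "\<And>r. 0 < r \<Longrightarrow> r < 1 \<Longrightarrow> r ^ d * m \<le> a * (\<Sum>j<Suc d. r ^ j) \<and> a * (\<Sum>j<Suc d. r ^ j) \<le> m"
  shows "a * real (Suc d) = m"
proof -
  define G where "G = (\<lambda>r::real. a * (\<Sum>j<Suc d. r ^ j))"
  have ev: "eventually (\<lambda>r. r \<in> {0<..<1}) (at_left (1::real))"
    by (rule eventually_at_left_real) simp
  have lim_G: "(G \<longlongrightarrow> a * real (Suc d)) (at_left 1)"
    using tendsto_intros(1)[of "(\<lambda>r. a * (\<Sum>j<Suc d. r ^ j))"]
    unfolding G_def by (auto intro!: tendsto_eq_intros)
  have "m \<le> a * real (Suc d)"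
    using tendsto_le[OF trivial_limit_at_left_real lim_G, of "\<lambda>r. r ^ d * m" m]
      eventually_mono[OF ev] assms by (fastforce simp: G_def intro!: tendsto_eq_intros)
  moreover have "a * real (Suc d) \<le> m"
    using tendsto_le[OF trivial_limit_at_left_real tendsto_const lim_G]
      eventually_mono[OF ev] assms by (fastforce simp: G_def)
  ultimately show ?thesis by simp
qed

text \<open>Dividing the bounds by \<open>t = (1 - r) / |S|\<close> squeezes \<open>I |S| (1 + r + \<dots> + r^d)\<close> between
  \<open>r^d m\<close> and \<open>m\<close>.\<close>

lemma integral_bary_min:
  assumes V: "is_simplex (V::'a::euclidean_space set)" and S: "S \<subseteq> V" "S \<noteq> {}"
  shows "(\<integral>x. indicator (convex hull V) x * bary_min V S x \<partial>lborel)
     = measure lborel (convex hull V) / (real (card S) * (real DIM('a) + 1))"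
proof -
  define I where "I = (\<integral>x. indicator (convex hull V) x * bary_min V S x \<partial>lborel)"
  define m where "m = measure lborel (convex hull V)"
  define k where "k = real (card S)"
  define d where "d = DIM('a)"
  have k: "k > 0"
    using S finite_subset[OF S(1) is_simplex_finite[OF V]] by (simp add: k_def card_gt_0_iff)
  have "r ^ d * m \<le> I * k * (\<Sum>j<Suc d. r ^ j) \<and> I * k * (\<Sum>j<Suc d. r ^ j) \<le> m"
    if r: "0 < r" "r < 1" for r
  proof -
    define t where "t = (1 - r) / k"
    have t: "t > 0" "t * k = 1 - r" using r k by (simp_all add: t_def)
    have "I - r ^ d * (t * m + r * I) = I * (1 - r ^ Suc d) - t * (r ^ d * m)"
      by (simp add: algebra_simps)
    also have "1 - r ^ Suc d = t * k * (\<Sum>j<Suc d. r ^ j)"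
      unfolding t(2) by (rule one_diff_power_eq)
    also have "I * (t * k * (\<Sum>j<Suc d. r ^ j)) - t * (r ^ d * m)
        = t * (I * k * (\<Sum>j<Suc d. r ^ j) - r ^ d * m)"
      by (simp add: algebra_simps)
    finally have "0 \<le> t * (I * k * (\<Sum>j<Suc d. r ^ j) - r ^ d * m)
        \<and> t * (I * k * (\<Sum>j<Suc d. r ^ j) - r ^ d * m) \<le> t * (m - r ^ d * m)"
      using integral_bary_min_bounds[OF V S r] unfolding I_def m_def t_def k_def d_def by simp
    then show ?thesis using t(1) by (simp add: zero_le_mult_iff)
  qed
  then have "I * k * real (Suc d) = m" by (rule squeeze_geometric_sum_at_left_1)
  then have "I * (k * (real d + 1)) = m" by (simp add: algebra_simps)
  then have "I = m / (k * (real d + 1))" using k by (simp add: eq_divide_eq)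
  then show ?thesis unfolding I_def m_def k_def d_def .
qed

lemma integral_bary_max:
  assumes V: "is_simplex (V::'a::euclidean_space set)"
  shows "(\<integral>x. indicator (convex hull V) x * Max ((\<lambda>R. bary V R x) ` V) \<partial>lborel)
     = measure lborel (convex hull V) / (real DIM('a) + 1) * harm (DIM('a) + 1)"
proof -
  let ?K = "convex hull V"
  have fin: "finite V" by (rule is_simplex_finite[OF V])
  have "V \<noteq> {}" using V unfolding is_simplex_def by auto
  then have max: "Max ((\<lambda>R. bary V R x) ` V) = (\<Sum>S\<in>Pow V - {{}}. (-1) ^ (card S + 1) * bary_min V S x)" for x
    using sum_alternating_Min_eq_Max[OF fin, of "\<lambda>R. bary V R x"] by (simp add: bary_min_def)
  have int: "integrable lborel (\<lambda>x. indicator ?K x * bary_min V S x)" if "S \<in> Pow V - {{}}" for S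
    using that by (intro integrable_indicator_mult_continuous compact_convex_hull_simplex[OF V]
        continuous_on_bary_min[OF V]) auto
  have "(\<integral>x. indicator ?K x * Max ((\<lambda>R. bary V R x) ` V) \<partial>lborel)
      = (\<integral>x. (\<Sum>S\<in>Pow V - {{}}. (-1) ^ (card S + 1) * (indicator ?K x * bary_min V S x)) \<partial>lborel)"
    unfolding max by (simp add: sum_distrib_left algebra_simps)
  also have "\<dots> = (\<Sum>S\<in>Pow V - {{}}. (-1) ^ (card S + 1) * (\<integral>x. indicator ?K x * bary_min V S x \<partial>lborel))"
    using int by (subst Bochner_Integration.integral_sum) auto
  also have "\<dots> = (\<Sum>S\<in>Pow V - {{}}. (-1) ^ (card S + 1)
      * (measure lborel ?K / (real (card S) * (real DIM('a) + 1))))"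
    by (rule sum.cong) (auto simp: integral_bary_min[OF V])
  also have "\<dots> = measure lborel ?K / (real DIM('a) + 1)
      * (\<Sum>S\<in>Pow V - {{}}. (-1) ^ (card S + 1) / real (card S))"
    by (simp add: sum_distrib_left field_simps)
  also have "(\<Sum>S\<in>Pow V - {{}}. (-1) ^ (card S + 1) / real (card S)) = harm (DIM('a) + 1)"
    using sum_Pow_alternating_inverse_card[OF fin] V by (simp add: is_simplex_def)
  finally show ?thesis .
qed

section \<open>Integrals over the dual sub-regions\<close>

lemma m1_eq_harm: "m1 d = harm (Suc d) / (real d + 1) ^ 2"
proof -
  define u where "u = real d + 1"
  have u: "u > 0" by (simp add: u_def add_pos_nonneg)
  have "harm (Suc d) = harm d + 1 / u" by (simp add: harm_def u_def)
  then have "harm (Suc d) / u ^ 2 = (1 + u * harm d) / u ^ 3"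
    using u by (simp add: field_simps power2_eq_square power3_eq_cube)
  then show ?thesis by (simp add: m1_def u_def)
qed

lemma m1_add_m2:
  assumes "0 < d"
  shows "m1 d + real d * m2 d = 1 / (real d + 1)"
proof -
  have "real d * m2 d = ((real d)\<^sup>2 + 2 * real d - (real d + 1) * harm d) / (real d + 1) ^ 3"
    using assms by (simp add: m2_def)
  then have "m1 d + real d * m2 d = (real d + 1) ^ 2 / (real d + 1) ^ 3"
    by (simp add: m1_def add_divide_distrib[symmetric] power2_eq_square algebra_simps)
  then show ?thesis by (simp add: power2_eq_square power3_eq_cube add_pos_nonneg)
qed

text \<open>Summed over \<open>P\<close>, these integrals give the integral of the largest coordinate, which on
  \<open>dual_sub V P\<close> is that of \<open>P\<close>; the summands are equal by symmetry.\<close>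

lemma lborel_integral_dual_sub_bary_self:
  assumes V: "is_simplex (V::'a::euclidean_space set)" and P: "P \<in> V"
  shows "(\<integral>x. indicator (dual_sub V P) x * bary V P x \<partial>lborel)
       = m1 DIM('a) * measure lborel (convex hull V)"
proof -
  define a where "a = (\<lambda>P. \<integral>x. indicator (dual_sub V P) x * bary V P x \<partial>lborel)"
  define m where "m = measure lborel (convex hull V)"
  define d where "d = real DIM('a)"
  have fin: "finite V" by (rule is_simplex_finite[OF V])
  have cont: "continuous_on UNIV (\<lambda>x. Max ((\<lambda>R. bary V R x) ` V))"
    using fin V by (intro continuous_on_Max_image continuous_on_bary) (auto simp: is_simplex_def)
  have max_on_dual: "indicator (dual_sub V P') x * Max ((\<lambda>R. bary V R x) ` V)
      = indicator (dual_sub V P') x * bary V P' x" if "P' \<in> V" for P' x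
  proof (cases "x \<in> dual_sub V P'")
    case True
    have "Max ((\<lambda>R. bary V R x) ` V) = bary V P' x"
      by (rule Max_eqI) (use fin that True in \<open>auto simp: dual_sub_def\<close>)
    then show ?thesis by simp
  qed simp
  have "m / (d + 1) * harm (DIM('a) + 1) = (\<Sum>P'\<in>V. a P')"
    unfolding m_def d_def a_def integral_bary_max[OF V, symmetric] integral_convex_hull_eq_sum_dual_sub[OF V cont]
    by (rule sum.cong[OF refl]) (simp add: max_on_dual)
  also have "\<dots> = (\<Sum>P'\<in>V. a P)"
    using integral_dual_sub_bary_permute[OF V permutes_swap_id[OF P], of _ P P] by (simp add: a_def)
  also have "\<dots> = (d + 1) * a P" using V by (simp add: is_simplex_def d_def)
  finally have "a P = m / (d + 1) * harm (DIM('a) + 1) / (d + 1)"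
    by (simp add: d_def eq_divide_eq add_pos_nonneg)
  then show ?thesis by (simp add: a_def m_def d_def m1_eq_harm power2_eq_square)
qed

lemma integral_indicator_compact:
  fixes A :: "'a::euclidean_space set"
  assumes "compact A"
  shows "(\<integral>x. indicator A x * 1 \<partial>lborel) = measure lborel A"
  using assms emeasure_compact_finite[OF assms] by (simp add: compact_imp_closed borel_closed)

lemma measure_dual_sub:
  assumes V: "is_simplex (V::'a::euclidean_space set)" and P: "P \<in> V"
  shows "measure lborel (dual_sub V P) = measure lborel (convex hull V) / (real DIM('a) + 1)"
proof -
  define c where "c = measure lborel (dual_sub V P)"
  have same: "measure lborel (dual_sub V P') = c" if "P' \<in> V" for P'
    using integral_dual_sub_vertex_permutation[OF V permutes_swap_id[OF P that], of "\<lambda>_. 1" P]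
    by (simp add: c_def)
  have "measure lborel (convex hull V) = (\<Sum>P'\<in>V. measure lborel (dual_sub V P'))"
    using integral_convex_hull_eq_sum_dual_sub[OF V, of "\<lambda>_. 1"]
    unfolding integral_indicator_compact[OF compact_convex_hull_simplex[OF V]]
      integral_indicator_compact[OF compact_dual_sub[OF V]] by simp
  also have "\<dots> = (real DIM('a) + 1) * c" using same V by (simp add: is_simplex_def)
  finally show ?thesis by (simp add: c_def add_pos_nonneg)
qed

text \<open>The coordinates sum to one, so each row sums to the volume of \<open>dual_sub V P\<close>; the
  off-diagonal entries of a row are equal by symmetry.\<close>

lemma lborel_integral_dual_sub_bary_other:
  assumes V: "is_simplex (V::'a::euclidean_space set)" and P: "P \<in> V" and Q: "Q \<in> V" "Q \<noteq> P"
  shows "(\<integral>x. indicator (dual_sub V P) x * bary V Q x \<partial>lborel) = m2 DIM('a) * measure lborel (convex hull V)"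
proof -
  define b where "b = (\<lambda>Q. \<integral>x. indicator (dual_sub V P) x * bary V Q x \<partial>lborel)"
  define m where "m = measure lborel (convex hull V)"
  define d where "d = DIM('a)"
  have fin: "finite V" by (rule is_simplex_finite[OF V])
  have same: "b Q' = b Q" if "Q' \<in> V" "Q' \<noteq> P" for Q'
    using integral_dual_sub_bary_permute[OF V permutes_swap_id[OF Q(1) that(1)], of P Q] Q(2) that(2)
    by (simp add: b_def)
  have "(\<Sum>Q'\<in>V. b Q') = (\<integral>x. (\<Sum>Q'\<in>V. indicator (dual_sub V P) x * bary V Q' x) \<partial>lborel)"
    unfolding b_def using compact_dual_sub[OF V] continuous_on_bary[OF V]
    by (intro Bochner_Integration.integral_sum[symmetric] integrable_indicator_mult_continuous)
  also have "\<dots> = measure lborel (dual_sub V P)"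
    using compact_dual_sub[OF V, of P] emeasure_compact_finite[OF compact_dual_sub[OF V, of P]]
    by (simp add: sum_bary[OF V] compact_imp_closed borel_closed flip: sum_distrib_left)
  also have "\<dots> = (m1 d + real d * m2 d) * m"
    using measure_dual_sub[OF V P] m1_add_m2[of d] by (simp add: m_def d_def DIM_positive)
  finally have "(\<Sum>Q'\<in>V. b Q') = (m1 d + real d * m2 d) * m" .
  moreover have "(\<Sum>Q'\<in>V. b Q') = b P + (\<Sum>Q'\<in>V - {P}. b Q')" using fin P by (simp add: sum.remove)
  moreover have "(\<Sum>Q'\<in>V - {P}. b Q') = real d * b Q"
    using same V P by (simp add: is_simplex_def d_def card_Diff_singleton)
  moreover have "b P = m1 d * m" using lborel_integral_dual_sub_bary_self[OF V P] by (simp add: b_def m_def d_def)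
  ultimately have "real d * b Q = real d * (m2 d * m)" by (simp add: algebra_simps)
  then show ?thesis using DIM_positive by (simp add: b_def m_def d_def)
qed

lemma integral_eq_lborel_compact:
  fixes f :: "'a::euclidean_space \<Rightarrow> real"
  assumes "compact S" "continuous_on S f"
  shows "f integrable_on S" "integral S f = (\<integral>x. indicator S x * f x \<partial>lborel)"
  using set_borel_integral_eq_integral[of S f] borel_integrable_compact[OF assms]
  by (simp_all add: set_integrable_def set_lebesgue_integral_def)

lemma measure_lebesgue_convex_hull_simplex:
  "is_simplex V \<Longrightarrow> measure lebesgue (convex hull V) = measure lborel (convex hull V)"
  using convex_hull_simplex_borel by (metis measure_completion sets_lborel)

lemma integral_dual_sub_bary_self:
  assumes V: "is_simplex (V::'a::euclidean_space set)" and "P \<in> V"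
  shows "integral (dual_sub V P) (bary V P) = m1 DIM('a) * measure lebesgue (convex hull V)"
  using lborel_integral_dual_sub_bary_self[OF assms] measure_lebesgue_convex_hull_simplex[OF V]
    integral_eq_lborel_compact(2)[OF compact_dual_sub[OF V] continuous_on_bary[OF V]] by simp

lemma integral_dual_sub_bary_other:
  assumes V: "is_simplex (V::'a::euclidean_space set)" and "P \<in> V" "Q \<in> V" "Q \<noteq> P"
  shows "integral (dual_sub V P) (bary V Q) = m2 DIM('a) * measure lebesgue (convex hull V)"
  using lborel_integral_dual_sub_bary_other[OF assms] measure_lebesgue_convex_hull_simplex[OF V]
    integral_eq_lborel_compact(2)[OF compact_dual_sub[OF V] continuous_on_bary[OF V]] by simp

section \<open>The mass matrix\<close>

lemma simplicial_mesh_simplex: "simplicial_mesh T \<Longrightarrow> K \<in> T \<Longrightarrow> is_simplex K"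
  by (simp add: simplicial_mesh_def)

lemma simplicial_mesh_finite: "simplicial_mesh T \<Longrightarrow> finite T"
  by (simp add: simplicial_mesh_def)

lemma simplicial_mesh_Int:
  "simplicial_mesh T \<Longrightarrow> K \<in> T \<Longrightarrow> K' \<in> T \<Longrightarrow> convex hull K \<inter> convex hull K' = convex hull (K \<inter> K')"
  by (simp add: simplicial_mesh_def)

lemma negligible_simplicial_mesh_Int:
  assumes T: "simplicial_mesh (T::'a::euclidean_space set set)" and K: "K \<in> T" "K' \<in> T" "K \<noteq> K'"
  shows "negligible (convex hull K \<inter> convex hull K')"
proof -
  have sK: "is_simplex K" "is_simplex K'" using T K simplicial_mesh_simplex by blast+
  have fin: "finite K" "finite K'" using sK is_simplex_finite by blast+
  have "card (K \<inter> K') \<le> DIM('a)"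
  proof (rule ccontr)
    assume "\<not> ?thesis"
    moreover have "card K = DIM('a) + 1" "card K' = DIM('a) + 1" using sK by (simp_all add: is_simplex_def)
    ultimately have "K \<inter> K' = K" "K \<inter> K' = K'"
      using card_seteq[OF fin(1) Int_lower1, of K'] card_seteq[OF fin(2) Int_lower2, of K] by simp_all
    then show False using K(3) by simp
  qed
  then have "interior (convex hull (K \<inter> K')) = {}"
    using fin(1) by (simp add: empty_interior_convex_hull)
  then have "negligible (convex hull (K \<inter> K'))" by (simp add: negligible_convex_interior)
  then show ?thesis using simplicial_mesh_Int[OF T K(1,2)] by simp
qed

text \<open>By conformity, the element picked by \<open>SOME\<close> shares with \<open>K\<close> the face containing \<open>x\<close>, on
  which both have the same barycentric coordinates.\<close>

lemma nodal_basis_on_element: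
  assumes T: "simplicial_mesh (T::'a::euclidean_space set set)" and K: "K \<in> T" and x: "x \<in> convex hull K"
  shows "nodal_basis T Q x = (if Q \<in> K then bary K Q x else 0)"
proof (cases "\<exists>K'\<in>T. Q \<in> K' \<and> x \<in> convex hull K'")
  case True
  define K' where "K' = (SOME K'. K' \<in> T \<and> Q \<in> K' \<and> x \<in> convex hull K')"
  have K': "K' \<in> T" "Q \<in> K'" "x \<in> convex hull K'"
    using someI_ex[OF True[unfolded Bex_def]] unfolding K'_def by blast+
  have sK: "is_simplex K" "is_simplex K'" using T K K'(1) simplicial_mesh_simplex by blast+
  have "x \<in> convex hull (K \<inter> K')" using simplicial_mesh_Int[OF T K K'(1)] x K'(3) by blast
  then obtain u where u: "sum u (K \<inter> K') = 1" "(\<Sum>v\<in>K \<inter> K'. u v *\<^sub>R v) = x"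
    unfolding convex_hull_finite[OF finite_Int[OF disjI1[OF is_simplex_finite[OF sK(1)]]]] by blast
  have "bary K R x = (if R \<in> K \<inter> K' then u R else 0)" "bary K' R x = (if R \<in> K \<inter> K' then u R else 0)" for R
    using bary_sum_subset[OF sK(1) _ u(1), of R] bary_sum_subset[OF sK(2) _ u(1), of R] u(2) by auto
  then show ?thesis using True K'(2) by (auto simp: nodal_basis_def K'_def)
next
  case False
  then show ?thesis using K x by (auto simp: nodal_basis_def)
qed

lemma mass_eq_sum_elements:
  assumes T: "simplicial_mesh (T::'a::euclidean_space set set)"
  shows "mass T P Q = (\<Sum>K\<in>{K\<in>T. P \<in> K}. if Q \<in> K then integral (dual_sub K P) (bary K Q) else 0)"
proof -
  let ?TP = "{K\<in>T. P \<in> K}"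
  have "(nodal_basis T Q has_integral (if Q \<in> K then integral (dual_sub K P) (bary K Q) else 0)) (dual_sub K P)"
    if K: "K \<in> ?TP" for K
  proof -
    have sK: "is_simplex K" using K T simplicial_mesh_simplex by blast
    have "((\<lambda>x. if Q \<in> K then bary K Q x else 0) has_integral
        (if Q \<in> K then integral (dual_sub K P) (bary K Q) else 0)) (dual_sub K P)"
      using integral_eq_lborel_compact(1)[OF compact_dual_sub[OF sK] continuous_on_bary[OF sK]]
      by (auto simp: has_integral_integral)
    then show ?thesis
    proof (rule has_integral_eq[rotated])
      fix x assume "x \<in> dual_sub K P"
      then show "(if Q \<in> K then bary K Q x else 0) = nodal_basis T Q x"
        using nodal_basis_on_element[OF T, of K x Q] K dual_sub_subset[of K P] by auto
    qed
  qed
  moreover have "pairwise (\<lambda>K K'. negligible (dual_sub K P \<inter> dual_sub K' P)) ?TP"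
  proof (rule pairwiseI)
    fix K K' assume "K \<in> ?TP" "K' \<in> ?TP" "K \<noteq> K'"
    then have "negligible (convex hull K \<inter> convex hull K')"
      using negligible_simplicial_mesh_Int[OF T] by blast
    then show "negligible (dual_sub K P \<inter> dual_sub K' P)"
      by (rule negligible_subset) (use dual_sub_subset in blast)
  qed
  ultimately have "(nodal_basis T Q has_integral
      (\<Sum>K\<in>?TP. if Q \<in> K then integral (dual_sub K P) (bary K Q) else 0)) (\<Union>K\<in>?TP. dual_sub K P)"
    using simplicial_mesh_finite[OF T] by (intro has_integral_UN) auto
  then show ?thesis unfolding mass_def dual_elem_def by (simp add: integral_unique)
qed

lemma measure_patch_Int:
  assumes T: "simplicial_mesh (T::'a::euclidean_space set set)"
  shows "measure lebesgue (patch T P \<inter> patch T Q)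
       = (\<Sum>K\<in>{K\<in>T. P \<in> K \<and> Q \<in> K}. measure lebesgue (convex hull K))"
proof -
  let ?U = "\<Union>K\<in>{K\<in>T. P \<in> K \<and> Q \<in> K}. convex hull K"
  let ?Z = "\<Union>(K, K')\<in>T \<times> T - Id. convex hull K \<inter> convex hull K'"
  have fin: "finite T" by (rule simplicial_mesh_finite[OF T])
  have hull_lmeasurable: "convex hull K \<in> lmeasurable" if "K \<in> T" for K
    using that T simplicial_mesh_simplex compact_convex_hull_simplex lmeasurable_compact by blast
  have U: "measure lebesgue ?U = (\<Sum>K\<in>{K\<in>T. P \<in> K \<and> Q \<in> K}. measure lebesgue (convex hull K))"
    using fin hull_lmeasurable negligible_simplicial_mesh_Int[OF T]
    by (intro measure_negligible_finite_Union_image) (auto simp: pairwise_def)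
  have "negligible ?Z"
    using fin negligible_simplicial_mesh_Int[OF T] by (intro negligible_Union) (auto simp: Id_def)
  moreover have "?U - patch T P \<inter> patch T Q \<union> (patch T P \<inter> patch T Q - ?U) \<subseteq> ?Z"
    unfolding patch_def by blast
  ultimately have "negligible (?U - patch T P \<inter> patch T Q \<union> (patch T P \<inter> patch T Q - ?U))"
    by (rule negligible_subset)
  moreover have "?U \<in> lmeasurable" using fin hull_lmeasurable by (intro fmeasurable.finite_UN) auto
  ultimately have "measure lebesgue (patch T P \<inter> patch T Q) = measure lebesgue ?U"
    by (intro measure_negligible_symdiff)
  with U show ?thesis by simp
qed

lemma mass_eq_sum_common_elements:
  assumes T: "simplicial_mesh (T::'a::euclidean_space set set)"
  shows "mass T P Q = (if Q = P then m1 DIM('a) else m2 DIM('a))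
    * (\<Sum>K\<in>{K\<in>T. P \<in> K \<and> Q \<in> K}. measure lebesgue (convex hull K))"
proof -
  have "mass T P Q = (\<Sum>K\<in>{K\<in>T. P \<in> K}. if Q \<in> K then
      (if Q = P then m1 DIM('a) else m2 DIM('a)) * measure lebesgue (convex hull K) else 0)"
    unfolding mass_eq_sum_elements[OF T]
    using simplicial_mesh_simplex[OF T] integral_dual_sub_bary_self[where 'a = 'a]
      integral_dual_sub_bary_other[where 'a = 'a]
    by (intro sum.cong) auto
  also have "\<dots> = (\<Sum>K\<in>{K\<in>{K\<in>T. P \<in> K}. Q \<in> K}.
      (if Q = P then m1 DIM('a) else m2 DIM('a)) * measure lebesgue (convex hull K))"
    using simplicial_mesh_finite[OF T] by (intro sum.inter_filter[symmetric]) simp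
  also have "{K\<in>{K\<in>T. P \<in> K}. Q \<in> K} = {K\<in>T. P \<in> K \<and> Q \<in> K}" by auto
  finally show ?thesis by (simp add: sum_distrib_left)
qed

lemma mass_eq_measure_patch_Int:
  assumes "simplicial_mesh (T::'a::euclidean_space set set)"
  shows "mass T P Q = (if Q = P then m1 DIM('a) else m2 DIM('a)) * measure lebesgue (patch T P \<inter> patch T Q)"
  using mass_eq_sum_common_elements[OF assms] measure_patch_Int[OF assms] by simp

theorem mainTheorem12:
  shows "m1 DIM('a::euclidean_space) + real DIM('a) * m2 DIM('a) = 1 / (real DIM('a) + 1)
    \<and> (\<forall>V::'a set. is_simplex V \<longrightarrow>
         (\<forall>P\<in>V. integral (dual_sub V P) (bary V P) = m1 DIM('a) * measure lebesgue (convex hull V)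
               \<and> (\<forall>Q\<in>V. Q \<noteq> P \<longrightarrow>
                    integral (dual_sub V P) (bary V Q) = m2 DIM('a) * measure lebesgue (convex hull V))))
    \<and> (\<forall>T::'a set set. simplicial_mesh T \<longrightarrow>
         (\<forall>P Q. interior_vertex T P \<and> interior_vertex T Q \<longrightarrow>
            (P = Q \<longrightarrow> mass T P P = m1 DIM('a) * measure lebesgue (patch T P))
          \<and> (P \<noteq> Q \<longrightarrow> mass T P Q = m2 DIM('a) * measure lebesgue (patch T P \<inter> patch T Q))
          \<and> mass T P Q = mass T Q P))"
  using m1_add_m2[OF DIM_positive] integral_dual_sub_bary_self[where 'a = 'a]
    integral_dual_sub_bary_other[where 'a = 'a] mass_eq_measure_patch_Int[where 'a = 'a]
  by (auto simp: Int_commute)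

end
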